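(* Let $L_1,L_2\in(0,\infty]$, not both equal to $\infty$, and $\mu_1,\mu_2\in\mathbb{R}$ with $\mu_1<L_1$, $\mu_2<L_2$, and assume $\mu_1+\mu_2>0$ or $\mu_1=\mu_2=0$. Let $f_1\in\mathcal{F}_{\mu_1,L_1}$, $f_2\in\mathcal{F}_{\mu_2,L_2}$, with $F=f_1-f_2$ bounded below and $F^*:=\inf F$. Run $N\ge1$ DCA iterations from $x^0$, producing $x^1,\dots,x^N$, where at iteration $k$ ($0\le k\le N-1$) the subgradient $g_2^k\in\partial f_2(x^k)$ is selected; set $g_1^{k}:=g_2^{k-1}\in\partial f_1(x^{k})$ for $1\le k\le N$, and let $g_1^0\in\partial f_1(x^0)$ and $g_2^N\in\partial f_2(x^N)$ be arbitrary. If $(L_1,L_2,\mu_1,\mu_2)$ lies in the domain $D_i$ for some $i\in\{1,\dots,8\}$ and $p_i:=\sigma_i+\sigma_i^+>0$, then $$\frac12\min_{0\le k\le N}\|g_1^k-g_2^k\|^2\ \le\ \frac{F(x^0)-F(x^N)}{p_i N}.$$ If in addition $L_1>\mu_2$, then $$\frac12\min_{0\le k\le N}\|g_1^k-g_2^k\|^2\ \le\ \frac{F(x^0)-F^*}{p_i N+\frac{1}{L_1-\mu_2}}$$ (with $\frac{1}{L_1-\mu_2}=0$ if $L_1=\infty$). Here the domains and constants are: with $S_1:=\mu_1^{-1}+\mu_2^{-1}+L_2^{-1}$, $S_2:=\mu_1^{-1}+\mu_2^{-1}+L_1^{-1}$, (1) $D_1$: $L_1\ge L_2>\mu_1\ge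 0$ and either $\mu_2\ge 0$ or [$\mu_1>-\mu_2>0$ and $S_1\le L_1^{-1}(2+L_2/\mu_2)$]; $\sigma_1=\frac{L_2-\mu_1}{L_2(L_1-\mu_1)}$, $\sigma_1^+=\frac{1}{L_2}\big(1+\frac{\mu_1(L_1-L_2)}{L_2(L_1-\mu_1)}\big)$. (2) $D_2$: $L_2\ge L_1>\mu_2\ge 0$ and either $\mu_1\ge 0$ or [$\mu_2>-\mu_1>0$ and $S_2\le L_2^{-1}(2+L_1/\mu_1)$]; $\sigma_2=\frac{1}{L_1}\big(1+\frac{\mu_2(L_2-L_1)}{L_1(L_2-\mu_2)}\big)$, $\sigma_2^+=\frac{L_1-\mu_2}{L_1(L_2-\mu_2)}$. (3) $D_3$: $\mu_1>-\mu_2>0$, $L_2>\mu_1$, $L_1>\mu_2$, $L_1^{-1}(2+L_2/\mu_2)\le S_1\le 0$; $\sigma_3=\frac{L_1^{-1}S_1}{S_1-L_1^{-1}}$, $\sigma_3^+=\frac{1}{L_2+\mu_2}$. (4) $D_4$: $\mu_2>-\mu_1>0$, $L_2>\mu_1$, $L_1>\mu_2$, $L_2^{-1}(2+L_1/\mu_1)\le S_2\le 0$; $\sigma_4=\frac{1}{L_1+\mu_1}$, $\sigma_4^+=\frac{L_2^{-1}S_2}{S_2-L_2^{-1}}$. (5) $D_5$: $\mu_1>-\mu_2>0$, $L_1>\mu_2$, $\max\{L_1^{-1}(2+L_2/\mu_2),0\}<S_1$; $\sigma_5=0$, $\sigma_5^+=\frac{\mu_1+\mu_2}{\mu_2^2}$.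 (6) $D_6$: $\mu_2>-\mu_1>0$, $L_2>\mu_1$, $\max\{L_2^{-1}(2+L_1/\mu_1),0\}<S_2$; $\sigma_6=\frac{\mu_1+\mu_2}{\mu_1^2}$, $\sigma_6^+=0$. (7) $D_7$: $L_1>\mu_1>L_2>0$ and either $\mu_2\ge0$ or [$\mu_2<0$ and $S_1\le0$]; $\sigma_7=0$, $\sigma_7^+=\frac{L_2+\mu_1}{L_2^2}$. (8) $D_8$: $L_2>\mu_2>L_1>0$ and either $\mu_1\ge0$ or [$\mu_1<0$ and $S_2\le0$]; $\sigma_8=\frac{L_1+\mu_2}{L_1^2}$, $\sigma_8^+=0$. Whenever $L_1$ or $L_2$ equals $\infty$, all expressions are interpreted as limits as that parameter tends to $+\infty$.
   Context: For $L\in(0,\infty]$ and $\mu<L$, $\mathcal{F}_{\mu,L}=\mathcal{F}_{\mu,L}(\mathbb{R}^d)$ denotes the class of proper lower semicontinuous functions $f:\mathbb{R}^d\to\mathbb{R}$ such that $f-\frac{\mu}{2}\|\cdot\|^2$ is convex and, if $L<\infty$, also $\frac{L}{2}\|\cdot\|^2-f$ is convex (for $L=\infty$ only the first condition is imposed). Subdifferential: for convex $f$, $\partial f(x)=\{g:\ f(y)\ge f(x)+\langle g,y-x\rangle\ \forall y\}$; for $f\in\mathcal{F}_{\mu,L}$ with $\mu<0$, $\partial f(x):=\{g-\mu x:\ g\in\partial\tilde f(x)\}$ where $\tilde f=f-\frac{\mu}{2}\|\cdot\|^2$ is convex. One DCA iteration from $x$: select $g_2\in\partial f_2(x)$, then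 select $x^+\in\arg\min_{w\in\mathbb{R}^d}\{f_1(w)-\langle g_2,w\rangle\}$ (assumed to exist); the optimality condition gives $g_2\in\partial f_1(x^+)$. *)

theory Defs
  imports "HOL-Analysis.Analysis" "HOL-Library.Extended_Real"
begin

definition lsc_fun :: "('a::topological_space \<Rightarrow> real) \<Rightarrow> bool" where
  "lsc_fun f \<longleftrightarrow> (\<forall>c. closed {x. f x \<le> c})"

definition FmuL :: "real \<Rightarrow> ereal \<Rightarrow> ('a::euclidean_space \<Rightarrow> real) \<Rightarrow> bool" where
  "FmuL mu L f \<longleftrightarrow> lsc_fun f
     \<and> convex_on UNIV (\<lambda>x. f x - mu / 2 * (norm x)\<^sup>2)
     \<and> (L \<noteq> \<infinity> \<longrightarrow> convex_on UNIV (\<lambda>x. real_of_ereal L / 2 * (norm x)\<^sup>2 - f x))"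

definition conv_subdiff :: "('a::real_inner \<Rightarrow> real) \<Rightarrow> 'a \<Rightarrow> 'a set" where
  "conv_subdiff f x = {g. \<forall>y. f y \<ge> f x + inner g (y - x)}"

text \<open>Subdifferential of f in F_{mu,L}: the convex one if mu >= 0 (f convex), otherwise
  shifted from the convex function f - mu/2 |.|^2.\<close>
definition subdiff :: "real \<Rightarrow> ('a::real_inner \<Rightarrow> real) \<Rightarrow> 'a \<Rightarrow> 'a set" where
  "subdiff mu f x = (if mu \<ge> 0 then conv_subdiff f x
     else {g + mu *\<^sub>R x | g. g \<in> conv_subdiff (\<lambda>y. f y - mu / 2 * (norm y)\<^sup>2) x})"

definition ext_val :: "(real \<Rightarrow> real \<Rightarrow> real) \<Rightarrow> ereal \<Rightarrow> ereal \<Rightarrow> ereal" where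
  "ext_val e L1 L2 =
     (if L1 = \<infinity> \<and> L2 \<noteq> \<infinity> then Lim at_top (\<lambda>t. ereal (e t (real_of_ereal L2)))
      else if L2 = \<infinity> \<and> L1 \<noteq> \<infinity> then Lim at_top (\<lambda>t. ereal (e (real_of_ereal L1) t))
      else ereal (e (real_of_ereal L1) (real_of_ereal L2)))"

definition S1f :: "real \<Rightarrow> real \<Rightarrow> real \<Rightarrow> real \<Rightarrow> real" where
  "S1f mu1 mu2 = (\<lambda>l1 l2. 1/mu1 + 1/mu2 + 1/l2)"

definition S2f :: "real \<Rightarrow> real \<Rightarrow> real \<Rightarrow> real \<Rightarrow> real" where
  "S2f mu1 mu2 = (\<lambda>l1 l2. 1/mu1 + 1/mu2 + 1/l1)"

definition T1f :: "real \<Rightarrow> real \<Rightarrow> real \<Rightarrow> real \<Rightarrow> real" where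
  "T1f mu1 mu2 = (\<lambda>l1 l2. (1/l1) * (2 + l2/mu2))"

definition T2f :: "real \<Rightarrow> real \<Rightarrow> real \<Rightarrow> real \<Rightarrow> real" where
  "T2f mu1 mu2 = (\<lambda>l1 l2. (1/l2) * (2 + l1/mu1))"

definition inDom :: "nat \<Rightarrow> ereal \<Rightarrow> ereal \<Rightarrow> real \<Rightarrow> real \<Rightarrow> bool" where
  "inDom i L1 L2 mu1 mu2 =
    (let S1 = ext_val (S1f mu1 mu2) L1 L2; S2 = ext_val (S2f mu1 mu2) L1 L2;
         T1 = ext_val (T1f mu1 mu2) L1 L2; T2 = ext_val (T2f mu1 mu2) L1 L2 in
    (if i = 1 then L1 \<ge> L2 \<and> L2 > ereal mu1 \<and> mu1 \<ge> 0 \<and>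
        (mu2 \<ge> 0 \<or> (mu1 > - mu2 \<and> - mu2 > 0 \<and> S1 \<le> T1))
     else if i = 2 then L2 \<ge> L1 \<and> L1 > ereal mu2 \<and> mu2 \<ge> 0 \<and>
        (mu1 \<ge> 0 \<or> (mu2 > - mu1 \<and> - mu1 > 0 \<and> S2 \<le> T2))
     else if i = 3 then mu1 > - mu2 \<and> - mu2 > 0 \<and> L2 > ereal mu1 \<and> L1 > ereal mu2 \<and>
        T1 \<le> S1 \<and> S1 \<le> 0
     else if i = 4 then mu2 > - mu1 \<and> - mu1 > 0 \<and> L2 > ereal mu1 \<and> L1 > ereal mu2 \<and>
        T2 \<le> S2 \<and> S2 \<le> 0
     else if i = 5 then mu1 > - mu2 \<and> - mu2 > 0 \<and> L1 > ereal mu2 \<and> max T1 0 < S1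
     else if i = 6 then mu2 > - mu1 \<and> - mu1 > 0 \<and> L2 > ereal mu1 \<and> max T2 0 < S2
     else if i = 7 then L1 > ereal mu1 \<and> ereal mu1 > L2 \<and> L2 > 0 \<and>
        (mu2 \<ge> 0 \<or> (mu2 < 0 \<and> S1 \<le> 0))
     else if i = 8 then L2 > ereal mu2 \<and> ereal mu2 > L1 \<and> L1 > 0 \<and>
        (mu1 \<ge> 0 \<or> (mu1 < 0 \<and> S2 \<le> 0))
     else False))"

definition sigma_f :: "nat \<Rightarrow> real \<Rightarrow> real \<Rightarrow> real \<Rightarrow> real \<Rightarrow> real" where
  "sigma_f i mu1 mu2 = (\<lambda>l1 l2.
     (if i = 1 then (l2 - mu1) / (l2 * (l1 - mu1))
      else if i = 2 then (1/l1) * (1 + mu2 * (l2 - l1) / (l1 * (l2 - mu2)))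
      else if i = 3 then ((1/l1) * S1f mu1 mu2 l1 l2) / (S1f mu1 mu2 l1 l2 - 1/l1)
      else if i = 4 then 1 / (l1 + mu1)
      else if i = 5 then 0
      else if i = 6 then (mu1 + mu2) / mu1\<^sup>2
      else if i = 7 then 0
      else if i = 8 then (l1 + mu2) / l1\<^sup>2
      else 0))"

definition sigmap_f :: "nat \<Rightarrow> real \<Rightarrow> real \<Rightarrow> real \<Rightarrow> real \<Rightarrow> real" where
  "sigmap_f i mu1 mu2 = (\<lambda>l1 l2.
     (if i = 1 then (1/l2) * (1 + mu1 * (l1 - l2) / (l2 * (l1 - mu1)))
      else if i = 2 then (l1 - mu2) / (l1 * (l2 - mu2))
      else if i = 3 then 1 / (l2 + mu2)
      else if i = 4 then ((1/l2) * S2f mu1 mu2 l1 l2) / (S2f mu1 mu2 l1 l2 - 1/l2)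
      else if i = 5 then (mu1 + mu2) / mu2\<^sup>2
      else if i = 6 then 0
      else if i = 7 then (l2 + mu1) / l2\<^sup>2
      else if i = 8 then 0
      else 0))"

definition p_const :: "nat \<Rightarrow> ereal \<Rightarrow> ereal \<Rightarrow> real \<Rightarrow> real \<Rightarrow> ereal" where
  "p_const i L1 L2 mu1 mu2 =
     ext_val (sigma_f i mu1 mu2) L1 L2 + ext_val (sigmap_f i mu1 mu2) L1 L2"

end

theory Submission
  imports Defs "HOL-Real_Asymp.Real_Asymp"
begin

text \<open>At iteration k of DCA, g2^k is a subgradient of f2 at x^k and, by optimality of x^(k+1),
  of f1 at x^(k+1). For f in F_{mu,L} with subgradients g_u, g_v at u, v one has
  f(u) >= f(v) + <g_v, u - v> + s/2 |g_u - g_v|^2 + e/2 |u - v|^2 for every admissible pair (s, e),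
  a nonnegative combination of the two interpolation inequalities between u and v. Applying it to
  f1 on (x^k, x^(k+1)) with (sigma_i, e1) and to f2 on (x^(k+1), x^k) with (sigma_i^+, e2), where
  e1 + e2 >= 0, gives
  F(x^k) - F(x^(k+1)) >= sigma_i/2 |g1^k - g2^k|^2 + sigma_i^+/2 |g1^(k+1) - g2^(k+1)|^2,
  and summing over k gives the first bound. The pairs are exhibited domain by domain; the even
  domains are the odd ones with the roles of f1 and f2 exchanged. For the second bound, one more
  step from x^N along -(g1^N - g2^N)/(L1 - mu2) lowers F by at least
  |g1^N - g2^N|^2 / (2 (L1 - mu2)).\<close>

lemma le_of_le_minus_linear:
  fixes a b C :: real
  assumes "\<And>t. 0 < t \<Longrightarrow> t \<le> 1 \<Longrightarrow> b - C * t \<le> a"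
  shows "b \<le> a"
proof (rule tendsto_upperbound)
  show "((\<lambda>t. b - C * t) \<longlongrightarrow> b) (at_right 0)"
    by (auto intro!: tendsto_eq_intros)
  show "\<forall>\<^sub>F t in at_right 0. b - C * t \<le> a"
    unfolding eventually_at_right_field using assms by (auto intro!: exI[of _ 1])
qed simp

lemma convex_on_support_of_quadratic_minorant:
  fixes h :: "'a::real_inner \<Rightarrow> real"
  assumes cvx: "convex_on UNIV h"
    and minor: "\<And>w. h x + inner p (w - x) - K * (norm (w - x))\<^sup>2 \<le> h w"
  shows "h x + inner p (z - x) \<le> h z"
proof -
  define v where "v = z - x"
  have "inner p v - K * (norm v)\<^sup>2 * t \<le> h z - h x" if t: "0 < t" "t \<le> 1" for t
  proof -
    define w where "w = (1 - t) *\<^sub>R x + t *\<^sub>R z"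
    have wx: "w - x = t *\<^sub>R v" by (simp add: w_def v_def algebra_simps)
    have "h w \<le> (1 - t) * h x + t * h z"
      unfolding w_def by (rule convex_onD[OF cvx]) (use t in auto)
    moreover have "h x + t * inner p v - K * (t\<^sup>2 * (norm v)\<^sup>2) \<le> h w"
      using minor[of w] by (simp add: wx power_mult_distrib)
    ultimately have "t * (inner p v - K * (norm v)\<^sup>2 * t) \<le> t * (h z - h x)"
      by (simp add: algebra_simps power2_eq_square)
    thus ?thesis using t by simp
  qed
  hence "inner p v \<le> h z - h x" by (rule le_of_le_minus_linear)
  thus ?thesis by (simp add: v_def)
qed

lemma convex_on_support_of_quadratic_majorant:
  fixes q :: "'a::real_inner \<Rightarrow> real"
  assumes cvx: "convex_on UNIV q"
    and major: "\<And>w. q w \<le> q x + inner p (w - x) + K * (norm (w - x))\<^sup>2"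
  shows "q x + inner p (z - x) \<le> q z"
proof -
  define v where "v = z - x"
  have "inner p v - K * (norm v)\<^sup>2 * \<tau> \<le> q z - q x" if \<tau>: "0 < \<tau>" "\<tau> \<le> 1" for \<tau>
  proof -
    define w where "w = x - \<tau> *\<^sub>R v"
    define t where "t = \<tau> / (1 + \<tau>)"
    have t: "0 \<le> t" "t \<le> 1" "(1 + \<tau>) * (1 - t) = 1" "(1 + \<tau>) * t = \<tau>"
      using \<tau> by (simp_all add: t_def field_simps)
    have "x = (1 - t) *\<^sub>R w + t *\<^sub>R z"
      using \<tau> by (simp add: w_def v_def t_def field_simps scaleR_add_left[symmetric] algebra_simps)
    hence "q x \<le> (1 - t) * q w + t * q z"
      using convex_onD[OF cvx, of t w z] t by simp
    hence "(1 + \<tau>) * q x \<le> (1 + \<tau>) * ((1 - t) * q w + t * q z)"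
      using \<tau> by (simp add: mult_left_mono)
    also have "\<dots> = q w + \<tau> * q z"
      by (simp only: distrib_left mult.assoc[symmetric] t(3,4) mult_1_left)
    finally have "(1 + \<tau>) * q x \<le> q w + \<tau> * q z" .
    moreover have "q w \<le> q x - \<tau> * inner p v + K * (\<tau>\<^sup>2 * (norm v)\<^sup>2)"
      using major[of w] by (simp add: w_def power_mult_distrib)
    ultimately have "\<tau> * (inner p v - K * (norm v)\<^sup>2 * \<tau>) \<le> \<tau> * (q z - q x)"
      by (simp add: algebra_simps power2_eq_square)
    thus ?thesis using \<tau> by simp
  qed
  hence "inner p v \<le> q z - q x" by (rule le_of_le_minus_linear)
  thus ?thesis by (simp add: v_def)
qed

definition strong_subgrad :: "real \<Rightarrow> ('a::real_inner \<Rightarrow> real) \<Rightarrow> 'a \<Rightarrow> 'a \<Rightarrow> bool" where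
  "strong_subgrad mu f x g \<longleftrightarrow> (\<forall>z. f x + inner g (z - x) + mu / 2 * (norm (z - x))\<^sup>2 \<le> f z)"

lemma norm_diff_power2:
  fixes x z :: "'a::real_inner"
  shows "(norm (z - x))\<^sup>2 = (norm z)\<^sup>2 - (norm x)\<^sup>2 - 2 * inner x (z - x)"
  by (simp add: power2_norm_eq_inner inner_diff inner_commute algebra_simps)

lemma strong_subgrad_iff_conv_subdiff:
  "strong_subgrad mu f x g \<longleftrightarrow> g - mu *\<^sub>R x \<in> conv_subdiff (\<lambda>y. f y - mu / 2 * (norm y)\<^sup>2) x"
proof -
  have e: "f x + inner g (z - x) + mu / 2 * (norm (z - x))\<^sup>2 =
      f x - mu / 2 * (norm x)\<^sup>2 + inner (g - mu *\<^sub>R x) (z - x) + mu / 2 * (norm z)\<^sup>2" for z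
    unfolding norm_diff_power2[of z x] inner_diff_left inner_scaleR_left by algebra
  show ?thesis
    unfolding strong_subgrad_def conv_subdiff_def mem_Collect_eq e le_diff_eq ..
qed

lemma strong_subgrad_of_subgrad:
  fixes f :: "'a::euclidean_space \<Rightarrow> real"
  assumes F: "FmuL mu L f" and subgrad: "\<And>w. f x + inner g (w - x) \<le> f w"
  shows "strong_subgrad mu f x g"
  unfolding strong_subgrad_iff_conv_subdiff conv_subdiff_def
proof (intro CollectI allI convex_on_support_of_quadratic_minorant)
  show "convex_on UNIV (\<lambda>y. f y - mu / 2 * (norm y)\<^sup>2)" using F by (simp add: FmuL_def)
  fix w
  have "f x - mu / 2 * (norm x)\<^sup>2 + inner (g - mu *\<^sub>R x) (w - x) - mu / 2 * (norm (w - x))\<^sup>2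
      = f x + inner g (w - x) - mu / 2 * (norm w)\<^sup>2"
    unfolding norm_diff_power2[of w x] inner_diff_left inner_scaleR_left by algebra
  thus "f x - mu / 2 * (norm x)\<^sup>2 + inner (g - mu *\<^sub>R x) (w - x) - mu / 2 * (norm (w - x))\<^sup>2
      \<le> f w - mu / 2 * (norm w)\<^sup>2"
    using subgrad[of w] by simp
qed

lemma strong_subgrad_of_subdiff:
  fixes f :: "'a::euclidean_space \<Rightarrow> real"
  assumes F: "FmuL mu L f" and g: "g \<in> subdiff mu f x"
  shows "strong_subgrad mu f x g"
proof (cases "mu \<ge> 0")
  case True
  thus ?thesis
    using g by (intro strong_subgrad_of_subgrad[OF F]) (simp add: subdiff_def conv_subdiff_def)
next
  case False
  thus ?thesis
    using g by (auto simp: subdiff_def strong_subgrad_iff_conv_subdiff)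
qed

lemma quadratic_upper_bound:
  fixes h :: "'a::real_inner \<Rightarrow> real"
  assumes cvx: "convex_on UNIV (\<lambda>w. L / 2 * (norm w)\<^sup>2 - h w)"
    and subgrad: "\<And>w. h x + inner s (w - x) \<le> h w"
  shows "h z \<le> h x + inner s (z - x) + L / 2 * (norm (z - x))\<^sup>2"
proof -
  let ?q = "\<lambda>w. L / 2 * (norm w)\<^sup>2 - h w"
  have expand: "?q x + inner (L *\<^sub>R x - s) (w - x) + L / 2 * (norm (w - x))\<^sup>2
      = L / 2 * (norm w)\<^sup>2 - (h x + inner s (w - x))" for w
    unfolding norm_diff_power2[of w x] inner_diff_left inner_scaleR_left by (simp add: field_simps)
  have "?q x + inner (L *\<^sub>R x - s) (z - x) \<le> ?q z"
  proof (rule convex_on_support_of_quadratic_majorant[OF cvx])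
    fix w
    show "?q w \<le> ?q x + inner (L *\<^sub>R x - s) (w - x) + L / 2 * (norm (w - x))\<^sup>2"
      using subgrad[of w] expand[of w] by linarith
  qed
  thus ?thesis
    using expand[of z] by simp
qed

lemma cocoercivity:
  fixes h :: "'a::real_inner \<Rightarrow> real"
  assumes subgrad_y: "\<And>w. h y + inner sy (w - y) \<le> h w"
    and upper_x: "\<And>z. h z \<le> h x + inner sx (z - x) + L / 2 * (norm (z - x))\<^sup>2" and L: "L > 0"
  shows "h y + inner sy (x - y) + 1 / (2 * L) * (norm (sx - sy))\<^sup>2 \<le> h x"
proof -
  define d where "d = sx - sy"
  define z where "z = x - (1 / L) *\<^sub>R d"
  have zx: "z - x = (- 1 / L) *\<^sub>R d" by (simp add: z_def)
  have zy: "z - y = (x - y) + (- 1 / L) *\<^sub>R d" by (simp add: z_def)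
  have dd: "inner sx d - inner sy d = (norm d)\<^sup>2"
    by (simp add: d_def inner_diff_left power2_norm_eq_inner)
  have "inner sx (z - x) - inner sy (z - y) + L / 2 * (norm (z - x))\<^sup>2
      = - inner sy (x - y) - (1 / L) * (inner sx d - inner sy d) + 1 / (2 * L) * (norm d)\<^sup>2"
    using L by (simp add: zx zy inner_add_right power_mult_distrib power2_eq_square algebra_simps)
  also have "\<dots> = - inner sy (x - y) - 1 / (2 * L) * (norm d)\<^sup>2"
    unfolding dd using L by (simp add: field_simps)
  finally have "inner sx (z - x) - inner sy (z - y) + L / 2 * (norm (z - x))\<^sup>2
      = - inner sy (x - y) - 1 / (2 * L) * (norm d)\<^sup>2" .
  thus ?thesis using subgrad_y[of z] upper_x[of z] by (simp add: d_def)
qed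

text \<open>The interpolation inequality of F_{mu,L} (Taylor, Hendrickx and Glineur).\<close>
lemma FmuL_interpolation:
  fixes f :: "'a::euclidean_space \<Rightarrow> real"
  assumes F: "FmuL mu (ereal L) f" and muL: "mu < L"
    and sx: "strong_subgrad mu f x gx" and sy: "strong_subgrad mu f y gy"
  shows "f y + inner gy (x - y) + mu / 2 * (norm (x - y))\<^sup>2
      + 1 / (2 * (L - mu)) * (norm (gx - gy - mu *\<^sub>R (x - y)))\<^sup>2 \<le> f x"
proof -
  define h where "h = (\<lambda>w. f w - mu / 2 * (norm w)\<^sup>2)"
  have "(\<lambda>w. (L - mu) / 2 * (norm w)\<^sup>2 - h w) = (\<lambda>w. L / 2 * (norm w)\<^sup>2 - f w)"
    unfolding h_def by (rule ext) algebra
  hence cvx: "convex_on UNIV (\<lambda>w. (L - mu) / 2 * (norm w)\<^sup>2 - h w)"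
    using F by (simp add: FmuL_def)
  have sub: "h z + inner (g - mu *\<^sub>R z) (w - z) \<le> h w" if "strong_subgrad mu f z g" for z g w
    using that unfolding strong_subgrad_iff_conv_subdiff conv_subdiff_def h_def by auto
  have "h y + inner (gy - mu *\<^sub>R y) (x - y)
      + 1 / (2 * (L - mu)) * (norm ((gx - mu *\<^sub>R x) - (gy - mu *\<^sub>R y)))\<^sup>2 \<le> h x"
    by (rule cocoercivity[OF sub[OF sy] quadratic_upper_bound[OF cvx sub[OF sx]]]) (use muL in simp)
  moreover have "(gx - mu *\<^sub>R x) - (gy - mu *\<^sub>R y) = gx - gy - mu *\<^sub>R (x - y)"
    by (simp add: algebra_simps)
  moreover have "h y + inner (gy - mu *\<^sub>R y) (x - y) - h x
      = f y + inner gy (x - y) + mu / 2 * (norm (x - y))\<^sup>2 - f x"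
    unfolding h_def norm_diff_power2[of x y] inner_diff_left inner_scaleR_left
    by (simp add: field_simps)
  ultimately show ?thesis by simp
qed

lemma norm_diff_scaleR_power2:
  fixes a b :: "'a::real_inner"
  shows "(norm (a - t *\<^sub>R b))\<^sup>2 = (norm a)\<^sup>2 - 2 * t * inner a b + t\<^sup>2 * (norm b)\<^sup>2"
  unfolding power2_norm_eq_inner inner_diff_left inner_diff_right inner_scaleR_left
    inner_scaleR_right inner_commute[of b a] by (simp add: algebra_simps power2_eq_square)

lemma quadratic_form_nonneg:
  fixes q w :: "'a::real_inner"
  assumes a: "a \<ge> 0" and c: "c \<ge> 0" and b: "b\<^sup>2 \<le> a * c"
  shows "0 \<le> a * (norm q)\<^sup>2 - 2 * b * inner q w + c * (norm w)\<^sup>2"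
proof (cases "a = 0")
  case True
  thus ?thesis using b c by simp
next
  case False
  have "(norm (a *\<^sub>R q - b *\<^sub>R w))\<^sup>2 = a\<^sup>2 * (norm q)\<^sup>2 - 2 * a * b * inner q w + b\<^sup>2 * (norm w)\<^sup>2"
    by (simp add: norm_diff_scaleR_power2 power_mult_distrib)
  hence "a * (a * (norm q)\<^sup>2 - 2 * b * inner q w + c * (norm w)\<^sup>2) =
      (norm (a *\<^sub>R q - b *\<^sub>R w))\<^sup>2 + (a * c - b\<^sup>2) * (norm w)\<^sup>2"
    by (simp add: algebra_simps power2_eq_square)
  also have "\<dots> \<ge> 0" using b by simp
  finally show ?thesis using False a by (simp add: zero_le_mult_iff)
qed

text \<open>(s, e) is admissible for F_{mu,L} when f u >= f v + <g_v, u - v> + s/2 |g_u - g_v|^2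
  + e/2 |u - v|^2 follows from strong convexity alone (s = 0) or, for finite L, from the
  interpolation inequalities at (u, v) and (v, u) with weights 1 + al and al: what is left over is
  the quadratic form in (g_u - g_v, u - v) with coefficients a, -b, c, which must be nonnegative.\<close>
definition admissible_pair :: "real \<Rightarrow> ereal \<Rightarrow> real \<Rightarrow> real \<Rightarrow> bool" where
  "admissible_pair mu L s e \<longleftrightarrow> (s = 0 \<and> e \<le> mu) \<or>
     (\<exists>Lr al. L = ereal Lr \<and> 0 \<le> al \<and>
        (let l = 1 / (Lr - mu); a = (1 + 2 * al) * l - s; b = al + (1 + 2 * al) * l * mu;
             c = (1 + 2 * al) * mu * (1 + l * mu) - e
         in 0 \<le> a \<and> 0 \<le> c \<and> b\<^sup>2 \<le> a * c))"

lemma weighted_interpolation_sum: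
  fixes fu fv G Q QW W al l mu s e :: real
  assumes I1: "fv + G + mu / 2 * W + l / 2 * (Q - 2 * mu * QW + mu\<^sup>2 * W) \<le> fu"
    and I2: "fu - G - QW + mu / 2 * W + l / 2 * (Q - 2 * mu * QW + mu\<^sup>2 * W) \<le> fv"
    and al: "al \<ge> 0"
    and quad: "0 \<le> ((1 + 2 * al) * l - s) * Q - 2 * (al + (1 + 2 * al) * l * mu) * QW
      + ((1 + 2 * al) * mu * (1 + l * mu) - e) * W"
  shows "fv + G + s / 2 * Q + e / 2 * W \<le> fu"
proof -
  have "0 \<le> (1 + al) * (fu - (fv + G + mu / 2 * W + l / 2 * (Q - 2 * mu * QW + mu\<^sup>2 * W)))
      + al * (fv - (fu - G - QW + mu / 2 * W + l / 2 * (Q - 2 * mu * QW + mu\<^sup>2 * W)))"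
    using I1 I2 al by (simp add: add_nonneg_nonneg)
  with quad show ?thesis
    by (simp add: field_simps power2_eq_square)
qed

lemma admissible_pair_descent:
  fixes f :: "'a::euclidean_space \<Rightarrow> real"
  assumes F: "FmuL mu L f" and muL: "ereal mu < L" and adm: "admissible_pair mu L s e"
    and su: "strong_subgrad mu f u gu" and sv: "strong_subgrad mu f v gv"
  shows "f v + inner gv (u - v) + s / 2 * (norm (gu - gv))\<^sup>2 + e / 2 * (norm (u - v))\<^sup>2 \<le> f u"
  using adm unfolding admissible_pair_def
proof (elim disjE exE conjE)
  assume "s = 0" "e \<le> mu"
  moreover have "e / 2 * (norm (u - v))\<^sup>2 \<le> mu / 2 * (norm (u - v))\<^sup>2"
    using \<open>e \<le> mu\<close> by (simp add: mult_right_mono)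
  moreover have "f v + inner gv (u - v) + mu / 2 * (norm (u - v))\<^sup>2 \<le> f u"
    using sv by (simp add: strong_subgrad_def)
  ultimately show ?thesis by simp
next
  fix Lr al
  assume L: "L = ereal Lr" and al: "0 \<le> al" and form: "let l = 1 / (Lr - mu);
    a = (1 + 2 * al) * l - s; b = al + (1 + 2 * al) * l * mu; c = (1 + 2 * al) * mu * (1 + l * mu) - e
    in 0 \<le> a \<and> 0 \<le> c \<and> b\<^sup>2 \<le> a * c"
  define l where "l = 1 / (Lr - mu)"
  define w where "w = u - v"
  define q where "q = gu - gv"
  have FL: "FmuL mu (ereal Lr) f" and mL: "mu < Lr" using F muL L by auto
  have l2: "1 / (2 * (Lr - mu)) = l / 2" by (simp add: l_def)
  note nq = norm_diff_scaleR_power2[of q mu w]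
  have "gv - gu - mu *\<^sub>R (v - u) = - (q - mu *\<^sub>R w)"
    by (simp add: q_def w_def algebra_simps)
  hence "norm (gv - gu - mu *\<^sub>R (v - u)) = norm (q - mu *\<^sub>R w)"
    by (simp only: norm_minus_cancel)
  moreover have "inner gu (v - u) = - inner gv w - inner q w" "norm (v - u) = norm w"
    by (simp_all add: q_def w_def inner_diff norm_minus_commute)
  ultimately have I2: "f u - inner gv w - inner q w + mu / 2 * (norm w)\<^sup>2
      + l / 2 * (norm (q - mu *\<^sub>R w))\<^sup>2 \<le> f v"
    using FmuL_interpolation[OF FL mL sv su] unfolding l2 by simp
  have I1: "f v + inner gv w + mu / 2 * (norm w)\<^sup>2 + l / 2 * (norm (q - mu *\<^sub>R w))\<^sup>2 \<le> f u"
    using FmuL_interpolation[OF FL mL su sv] unfolding l2 w_def q_def .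
  have "f v + inner gv w + s / 2 * (norm q)\<^sup>2 + e / 2 * (norm w)\<^sup>2 \<le> f u"
    by (rule weighted_interpolation_sum[OF I1[unfolded nq] I2[unfolded nq] al
          quadratic_form_nonneg]) (use form in \<open>simp_all add: l_def Let_def\<close>)
  thus ?thesis by (simp add: w_def q_def)
qed

lemma admissible_pair_zero: "e \<le> mu \<Longrightarrow> admissible_pair mu L 0 e"
  by (simp add: admissible_pair_def)

lemma admissible_pairI:
  assumes "l = 1 / (Lr - mu)" "0 \<le> al" "0 \<le> (1 + 2 * al) * l - s"
    "0 \<le> (1 + 2 * al) * mu * (1 + l * mu) - e"
    "(al + (1 + 2 * al) * l * mu)\<^sup>2 \<le> ((1 + 2 * al) * l - s) * ((1 + 2 * al) * mu * (1 + l * mu) - e)"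
  shows "admissible_pair mu (ereal Lr) s e"
  unfolding admissible_pair_def Let_def
  by (rule disjI2, rule exI[of _ Lr], rule exI[of _ al]) (use assms in auto)

lemma admissible_pair_interp:
  assumes "l = 1 / (Lr - mu)" "s \<le> l" "(l * mu)\<^sup>2 \<le> (l - s) * (mu * (1 + l * mu) - e)"
    "e \<le> mu * (1 + l * mu)"
  shows "admissible_pair mu (ereal Lr) s e"
  by (rule admissible_pairI[where al = 0]) (use assms in auto)

lemma admissible_pair_factor:
  assumes l: "l = 1 / (Lr - mu)" "l > 0" and al: "0 \<le> al" and k: "0 \<le> k"
    and a: "(1 + 2 * al) * l - s = k * l" and b: "al + (1 + 2 * al) * l * mu = lam * k * l"
    and c: "lam\<^sup>2 * k * l \<le> (1 + 2 * al) * mu * (1 + l * mu) - e"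
  shows "admissible_pair mu (ereal Lr) s e"
proof (rule admissible_pairI[OF l(1) al])
  show "0 \<le> (1 + 2 * al) * l - s" unfolding a using k l by simp
  have "0 \<le> lam\<^sup>2 * k * l" using k l by simp
  thus "0 \<le> (1 + 2 * al) * mu * (1 + l * mu) - e" using c by linarith
  show "(al + (1 + 2 * al) * l * mu)\<^sup>2 \<le> ((1 + 2 * al) * l - s) * ((1 + 2 * al) * mu * (1 + l * mu) - e)"
    unfolding a b using mult_left_mono[OF c, of "k * l"] k l by (simp add: power2_eq_square mult_ac)
qed

lemma admissible_pair_large_s:
  assumes mu: "mu < Lr" and "1 \<le> s * (Lr + mu)" and "1 \<le> s * Lr" and "e \<le> Lr * (1 - s * Lr)"
  shows "admissible_pair mu (ereal Lr) s e"
proof (rule admissible_pair_factor[where al = "s * Lr - 1" and k = "s * (Lr + mu) - 1" and lam = Lr])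
  have "(1 + 2 * (s * Lr - 1)) * mu * (1 + 1 / (Lr - mu) * mu) - Lr * (1 - s * Lr)
      = Lr\<^sup>2 * (s * (Lr + mu) - 1) * (1 / (Lr - mu))"
    using mu by (simp add: field_simps power2_eq_square)
  thus "Lr\<^sup>2 * (s * (Lr + mu) - 1) * (1 / (Lr - mu))
      \<le> (1 + 2 * (s * Lr - 1)) * mu * (1 + 1 / (Lr - mu) * mu) - e"
    using assms by linarith
qed (use assms in \<open>simp_all add: field_simps\<close>)

lemma admissible_pair_small_s:
  assumes mu: "mu < Lr" and "s * (Lr + mu) \<le> 1" and "s * mu \<le> 0" and "e \<le> mu * (1 - s * mu)"
  shows "admissible_pair mu (ereal Lr) s e"
proof (rule admissible_pair_factor[where al = "- s * mu" and k = "1 - s * (Lr + mu)" and lam = mu])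
  have "(1 + 2 * (- s * mu)) * mu * (1 + 1 / (Lr - mu) * mu) - mu * (1 - s * mu)
      = mu\<^sup>2 * (1 - s * (Lr + mu)) * (1 / (Lr - mu))"
    using mu by (simp add: field_simps power2_eq_square)
  thus "mu\<^sup>2 * (1 - s * (Lr + mu)) * (1 / (Lr - mu))
      \<le> (1 + 2 * (- s * mu)) * mu * (1 + 1 / (Lr - mu) * mu) - e"
    using assms by linarith
qed (use assms in \<open>simp_all add: field_simps\<close>)

lemma admissible_sigma1:
  fixes l1 l2 mu1 :: real
  assumes "l2 \<le> l1" "mu1 < l2" "0 \<le> mu1"
  shows "admissible_pair mu1 (ereal l1) ((l2 - mu1) / (l2 * (l1 - mu1))) (mu1 * (l1 - l2) / (l1 - mu1))"
proof (rule admissible_pair_interp[OF refl])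
  have nz: "l2 \<noteq> 0" "l1 \<noteq> mu1" using assms by auto
  have a: "1 / (l1 - mu1) - (l2 - mu1) / (l2 * (l1 - mu1)) = mu1 / (l2 * (l1 - mu1))"
    and c: "mu1 * (1 + 1 / (l1 - mu1) * mu1) - mu1 * (l1 - l2) / (l1 - mu1) = mu1 * l2 / (l1 - mu1)"
    using nz by (simp_all add: divide_simps) (simp_all add: algebra_simps)
  have "0 \<le> mu1 / (l2 * (l1 - mu1))" "0 \<le> mu1 * l2 / (l1 - mu1)" using assms by simp_all
  thus "(l2 - mu1) / (l2 * (l1 - mu1)) \<le> 1 / (l1 - mu1)"
    and "mu1 * (l1 - l2) / (l1 - mu1) \<le> mu1 * (1 + 1 / (l1 - mu1) * mu1)"
    using a c by linarith+
  show "(1 / (l1 - mu1) * mu1)\<^sup>2 \<le> (1 / (l1 - mu1) - (l2 - mu1) / (l2 * (l1 - mu1)))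
      * (mu1 * (1 + 1 / (l1 - mu1) * mu1) - mu1 * (l1 - l2) / (l1 - mu1))"
    unfolding a c using nz by (simp add: power2_eq_square)
qed

lemma admissible_sigma1p:
  fixes l1 l2 mu1 mu2 :: real
  assumes l: "l2 \<le> l1" "mu1 < l2" "0 \<le> mu1" "mu2 < l2"
    and cnd: "mu2 \<ge> 0 \<or> (mu1 > - mu2 \<and> - mu2 > 0 \<and> 1/mu1 + 1/mu2 + 1/l2 \<le> (1/l1) * (2 + l2/mu2))"
  defines "s \<equiv> (1/l2) * (1 + mu1 * (l1 - l2) / (l2 * (l1 - mu1)))"
  shows "admissible_pair mu2 (ereal l2) s (- (mu1 * (l1 - l2) / (l1 - mu1)))"
proof (rule admissible_pair_large_s)
  have r: "0 \<le> mu1 * (l1 - l2) / (l2 * (l1 - mu1))" using l by simp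
  have sl: "s * l2 = 1 + mu1 * (l1 - l2) / (l2 * (l1 - mu1))" using l by (simp add: s_def)
  thus "1 \<le> s * l2" using r by simp
  show "- (mu1 * (l1 - l2) / (l1 - mu1)) \<le> l2 * (1 - s * l2)"
    unfolding sl using l by (simp add: field_simps)
  show "1 \<le> s * (l2 + mu2)"
  proof (cases "mu2 \<ge> 0")
    case True
    moreover have "0 \<le> s" using r l by (simp add: s_def)
    ultimately show ?thesis using sl r by (simp add: distrib_left)
  next
    case False
    hence c: "mu1 > - mu2" "mu2 < 0" "1/mu1 + 1/mu2 + 1/l2 \<le> (1/l1) * (2 + l2/mu2)" using cnd by auto
    define D where "D = mu1 * l1 * l2 - mu1 * l2\<^sup>2 + mu2 * l1 * l2 + mu1 * mu2 * l1 - 2 * mu1 * mu2 * l2"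
    have neg: "mu1 * mu2 * l1 * l2 < 0" using c l by (simp add: mult_pos_neg mult_neg_pos)
    have "(1/l1) * (2 + l2/mu2) - (1/mu1 + 1/mu2 + 1/l2) = - D / (mu1 * mu2 * l1 * l2)"
      using c l by (simp add: D_def field_simps power2_eq_square)
    hence "0 \<le> - D / (mu1 * mu2 * l1 * l2)" using c(3) by simp
    hence "0 \<le> D" using neg by (simp add: divide_le_0_iff)
    moreover have "0 < l2\<^sup>2 * (l1 - mu1)" using l by simp
    ultimately have "0 \<le> D / (l2\<^sup>2 * (l1 - mu1))" by simp
    moreover have "s * (l2 + mu2) - 1 = D / (l2\<^sup>2 * (l1 - mu1))"
      using c l by (simp add: s_def D_def field_simps power2_eq_square)
    ultimately show ?thesis by simp
  qed
qed (use l in simp)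

lemma admissible_sigma7p:
  fixes l2 mu1 mu2 :: real
  assumes l: "0 < l2" "0 \<le> mu1" "mu2 < l2" and cnd: "mu2 \<ge> 0 \<or> (0 < mu1 \<and> 1/mu1 + 1/mu2 + 1/l2 \<le> 0)"
  shows "admissible_pair mu2 (ereal l2) ((l2 + mu1) / l2\<^sup>2) (- mu1)"
proof (rule admissible_pair_large_s)
  have sl: "(l2 + mu1) / l2\<^sup>2 * l2 = 1 + mu1 / l2" using l by (simp add: field_simps power2_eq_square)
  thus "1 \<le> (l2 + mu1) / l2\<^sup>2 * l2" using l by simp
  show "- mu1 \<le> l2 * (1 - (l2 + mu1) / l2\<^sup>2 * l2)" unfolding sl using l by (simp add: field_simps)
  have "0 \<le> mu1 * l2 + mu2 * l2 + mu1 * mu2"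
  proof (cases "mu2 \<ge> 0")
    case False
    hence "(1/mu1 + 1/mu2 + 1/l2) * (mu1 * mu2 * l2) = mu1 * l2 + mu2 * l2 + mu1 * mu2"
      and "mu1 * mu2 * l2 < 0" using cnd l by (simp_all add: field_simps mult_pos_neg)
    thus ?thesis using cnd False by (metis mult_nonpos_nonpos less_imp_le)
  qed (use l in simp)
  hence "0 \<le> (mu1 * l2 + mu2 * l2 + mu1 * mu2) / l2\<^sup>2" by simp
  moreover have "(l2 + mu1) / l2\<^sup>2 * (l2 + mu2) - 1 = (mu1 * l2 + mu2 * l2 + mu1 * mu2) / l2\<^sup>2"
    using l by (simp add: field_simps power2_eq_square)
  ultimately show "1 \<le> (l2 + mu1) / l2\<^sup>2 * (l2 + mu2)" by linarith
qed (use l in simp)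

lemma admissible_sigma3:
  fixes l1 mu1 S :: real
  assumes mu: "0 < mu1" "mu1 < l1" and S: "S \<le> 0"
  shows "0 \<le> ((1/l1) * S) / (S - 1/l1)"
    and "admissible_pair mu1 (ereal l1) (((1/l1) * S) / (S - 1/l1)) (mu1 / (1 - mu1 * S))"
proof -
  have l1: "0 < l1" using mu by simp
  have "mu1 * S \<le> 0" "l1 * S \<le> 0" using mu l1 S by (simp_all add: mult_nonneg_nonpos)
  hence p1: "0 < 1 - mu1 * S" and p2: "0 < 1 - l1 * S" by simp_all
  have s: "((1/l1) * S) / (S - 1/l1) = - S / (1 - l1 * S)"
    using l1 p2 by (simp add: field_simps)
  show "0 \<le> ((1/l1) * S) / (S - 1/l1)" unfolding s using S p2 by (simp add: divide_nonpos_pos)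
  have a: "1 / (l1 - mu1) - - S / (1 - l1 * S) = (1 - mu1 * S) / ((l1 - mu1) * (1 - l1 * S))"
    and c: "mu1 * (1 + 1 / (l1 - mu1) * mu1) - mu1 / (1 - mu1 * S)
      = mu1\<^sup>2 * (1 - l1 * S) / ((l1 - mu1) * (1 - mu1 * S))"
    using mu p1 p2 by (simp_all add: field_simps power2_eq_square)
  show "admissible_pair mu1 (ereal l1) (((1/l1) * S) / (S - 1/l1)) (mu1 / (1 - mu1 * S))"
    unfolding s
  proof (rule admissible_pair_interp[OF refl])
    have "0 \<le> (1 - mu1 * S) / ((l1 - mu1) * (1 - l1 * S))" using mu p1 p2 by simp
    thus "- S / (1 - l1 * S) \<le> 1 / (l1 - mu1)" using a by linarith
    have "0 \<le> mu1\<^sup>2 * (1 - l1 * S) / ((l1 - mu1) * (1 - mu1 * S))" using mu p1 p2 by simp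
    thus "mu1 / (1 - mu1 * S) \<le> mu1 * (1 + 1 / (l1 - mu1) * mu1)" using c by linarith
    show "(1 / (l1 - mu1) * mu1)\<^sup>2 \<le> (1 / (l1 - mu1) - - S / (1 - l1 * S))
        * (mu1 * (1 + 1 / (l1 - mu1) * mu1) - mu1 / (1 - mu1 * S))"
      unfolding a c using mu p1 p2 by (simp add: power2_eq_square)
  qed
qed

lemma admissible_sigma3p:
  fixes l2 mu2 :: real
  assumes "mu2 < 0" "0 < l2 + mu2"
  shows "admissible_pair mu2 (ereal l2) (1 / (l2 + mu2)) (mu2 * l2 / (l2 + mu2))"
  by (rule admissible_pair_small_s) (use assms in \<open>simp_all add: field_simps\<close>)

lemma admissible_sigma5p:
  fixes l2 mu1 mu2 :: real
  assumes mu: "- mu2 < mu1" "mu2 < 0" and l2: "0 < l2" and S: "0 < 1/mu1 + 1/mu2 + 1/l2"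
  shows "admissible_pair mu2 (ereal l2) ((mu1 + mu2) / mu2\<^sup>2) (- mu1)"
proof (rule admissible_pair_small_s)
  have "(1/mu1 + 1/mu2 + 1/l2) * (mu1 * mu2 * l2) = mu1 * l2 + mu2 * l2 + mu1 * mu2"
    and "mu1 * mu2 * l2 < 0" using mu l2 by (simp_all add: field_simps mult_pos_neg)
  hence "mu1 * l2 + mu2 * l2 + mu1 * mu2 < 0" using S by (metis mult_pos_neg)
  hence "(mu1 * l2 + mu2 * l2 + mu1 * mu2) / mu2\<^sup>2 \<le> 0" by (simp add: divide_nonpos_nonneg)
  moreover have "(mu1 + mu2) / mu2\<^sup>2 * (l2 + mu2) - 1 = (mu1 * l2 + mu2 * l2 + mu1 * mu2) / mu2\<^sup>2"
    using mu by (simp add: field_simps power2_eq_square)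
  ultimately show "(mu1 + mu2) / mu2\<^sup>2 * (l2 + mu2) \<le> 1" by linarith
  show "(mu1 + mu2) / mu2\<^sup>2 * mu2 \<le> 0"
    using mu by (simp add: power2_eq_square divide_nonneg_neg)
  show "- mu1 \<le> mu2 * (1 - (mu1 + mu2) / mu2\<^sup>2 * mu2)"
    using mu by (simp add: field_simps power2_eq_square)
qed (use assms in simp)

lemma ext_val_finite: "ext_val e (ereal a) (ereal b) = ereal (e a b)"
  by (simp add: ext_val_def)

lemma ext_val_infinity_left:
  "((\<lambda>t. e t b) \<longlongrightarrow> c) at_top \<Longrightarrow> ext_val e \<infinity> (ereal b) = ereal c"
  unfolding ext_val_def by (simp add: tendsto_Lim)

lemma ext_val_infinity_right:
  "((\<lambda>t. e a t) \<longlongrightarrow> c) at_top \<Longrightarrow> ext_val e (ereal a) \<infinity> = ereal c"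
  unfolding ext_val_def by (simp add: tendsto_Lim)

lemma ext_val_const_left: "(\<And>t. e t b = c) \<Longrightarrow> ext_val e L (ereal b) = ereal c"
  by (cases L) (simp_all add: ext_val_finite ext_val_infinity_left, simp add: ext_val_def)

lemma ext_val_swap: "ext_val e L1 L2 = ext_val (\<lambda>a b. e b a) L2 L1"
  by (auto simp: ext_val_def)

text \<open>e1 + e2 >= 0 is what makes the |x^k - x^(k+1)|^2 terms drop out of the per-step descent.\<close>
definition step_certificate :: "nat \<Rightarrow> ereal \<Rightarrow> ereal \<Rightarrow> real \<Rightarrow> real \<Rightarrow> bool" where
  "step_certificate i L1 L2 mu1 mu2 \<longleftrightarrow> (\<exists>s1 s2 e1 e2.
     ext_val (sigma_f i mu1 mu2) L1 L2 = ereal s1 \<and> ext_val (sigmap_f i mu1 mu2) L1 L2 = ereal s2 \<and>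
     0 \<le> s1 \<and> 0 \<le> s2 \<and> admissible_pair mu1 L1 s1 e1 \<and> admissible_pair mu2 L2 s2 e2 \<and> 0 \<le> e1 + e2)"

lemma step_certificateI:
  assumes "ext_val (sigma_f i mu1 mu2) L1 L2 = ereal s1" "ext_val (sigmap_f i mu1 mu2) L1 L2 = ereal s2"
    "0 \<le> s1" "0 \<le> s2" "admissible_pair mu1 L1 s1 e1" "admissible_pair mu2 L2 s2 e2" "0 \<le> e1 + e2"
  shows "step_certificate i L1 L2 mu1 mu2"
  unfolding step_certificate_def using assms by blast

lemma ext_val_S1f_ereal_right:
  "ext_val (S1f mu1 mu2) L1 (ereal l2) = ereal (1/mu1 + 1/mu2 + 1/l2)"
  by (rule ext_val_const_left) (simp add: S1f_def)

lemma reciprocal_sum_neg: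
  fixes a b :: real
  assumes "- b < a" "b < 0"
  shows "1/a + 1/b < 0"
proof -
  have "0 < a + b" "a * b < 0" using assms by (simp_all add: mult_pos_neg)
  thus ?thesis using assms by (simp add: field_simps divide_pos_neg)
qed

lemma step_certificate_D1:
  assumes L2: "0 < L2" "ereal mu2 < L2" and notboth: "\<not> (L1 = \<infinity> \<and> L2 = \<infinity>)"
    and D: "inDom 1 L1 L2 mu1 mu2"
  shows "step_certificate 1 L1 L2 mu1 mu2"
proof -
  have L: "L2 \<le> L1" "ereal mu1 < L2" "0 \<le> mu1" using D by (auto simp: inDom_def)
  obtain l2 where l2: "L2 = ereal l2" "0 < l2" "mu1 < l2" "mu2 < l2"
    using L2 L notboth by (cases L2) auto
  show ?thesis
  proof (cases L1)
    case (real l1)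
    have cnd: "l2 \<le> l1"
      "mu2 \<ge> 0 \<or> (mu1 > - mu2 \<and> - mu2 > 0 \<and> 1/mu1 + 1/mu2 + 1/l2 \<le> (1/l1) * (2 + l2/mu2))"
      using D by (simp_all add: inDom_def Let_def real l2(1) ext_val_finite S1f_def T1f_def)
    show ?thesis unfolding real l2(1)
      by (rule step_certificateI[OF _ _ _ _ admissible_sigma1[of l2 l1 mu1]
          admissible_sigma1p[of l2 l1 mu1 mu2]])
        (use l2 L cnd in \<open>simp_all add: ext_val_finite sigma_f_def sigmap_f_def\<close>)
  next
    case PInf
    have "ext_val (T1f mu1 mu2) \<infinity> (ereal l2) = ereal 0"
      by (rule ext_val_infinity_left) (simp add: T1f_def, real_asymp)
    hence cnd: "mu2 \<ge> 0 \<or> (0 < mu1 \<and> 1/mu1 + 1/mu2 + 1/l2 \<le> 0)"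
      using D by (auto simp: inDom_def Let_def PInf l2(1) ext_val_S1f_ereal_right)
    have "ext_val (sigma_f 1 mu1 mu2) \<infinity> (ereal l2) = ereal 0"
      by (rule ext_val_infinity_left) (use l2 in \<open>simp add: sigma_f_def, real_asymp\<close>)
    moreover have "ext_val (sigmap_f 1 mu1 mu2) \<infinity> (ereal l2) = ereal ((l2 + mu1) / l2\<^sup>2)"
      by (rule ext_val_infinity_left)
        (use l2 in \<open>simp add: sigmap_f_def, real_asymp simp: field_simps power2_eq_square\<close>)
    ultimately show ?thesis unfolding PInf l2(1)
      by (rule step_certificateI[OF _ _ _ _ admissible_pair_zero[of mu1 mu1] admissible_sigma7p])
        (use l2 L cnd in auto)
  qed (use L in simp)
qed

lemma step_certificate_D3_finite:
  assumes mu: "- mu2 < mu1" "mu2 < 0" and l: "mu1 < l1" "mu1 < l2" and S: "1/mu1 + 1/mu2 + 1/l2 \<le> 0"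
  shows "step_certificate 3 (ereal l1) (ereal l2) mu1 mu2"
proof -
  define S where "S = 1/mu1 + 1/mu2 + 1/l2"
  have mu1: "0 < mu1" and l2: "0 < l2 + mu2" using mu l by simp_all
  have "1 - mu1 * S = - (mu1 * (l2 + mu2) / (mu2 * l2))"
    using mu l by (simp add: S_def field_simps)
  moreover have "mu1 \<noteq> 0" "l2 + mu2 \<noteq> 0" "mu2 * l2 \<noteq> 0" using mu l by auto
  ultimately have "mu1 / (1 - mu1 * S) + mu2 * l2 / (l2 + mu2) = 0" by simp
  thus ?thesis
    using admissible_sigma3[OF mu1 l(1) S[folded S_def]] admissible_sigma3p[OF mu(2) l2] l2
    by (intro step_certificateI) (auto simp: ext_val_finite sigma_f_def sigmap_f_def S1f_def S_def)
qed

lemma step_certificate_D3_infinity_left: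
  assumes mu: "- mu2 < mu1" "mu2 < 0" and l: "mu1 < l2" and S: "1/mu1 + 1/mu2 + 1/l2 \<le> 0"
  shows "step_certificate 3 \<infinity> (ereal l2) mu1 mu2"
proof -
  have l2: "0 < l2" "0 < l2 + mu2" using mu l by simp_all
  hence "(1/mu1 + 1/mu2 + 1/l2) * (mu1 * mu2 * l2) = mu1 * l2 + mu2 * l2 + mu1 * mu2"
    and "mu1 * mu2 * l2 < 0" using mu by (simp_all add: field_simps mult_pos_neg mult_neg_pos)
  hence "0 \<le> mu1 * l2 + mu2 * l2 + mu1 * mu2" using S by (metis mult_nonpos_nonpos less_imp_le)
  hence sum: "0 \<le> mu1 + mu2 * l2 / (l2 + mu2)" using l2 by (simp add: field_simps)
  have "((\<lambda>t. sigma_f 3 mu1 mu2 t l2) \<longlongrightarrow> 0) at_top"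
  proof (cases "1/mu1 + 1/mu2 + 1/l2 = 0")
    case False
    hence "1/mu1 + 1/mu2 + 1/l2 < 0" using S by simp
    thus ?thesis by (simp add: sigma_f_def S1f_def) real_asymp
  qed (simp add: sigma_f_def S1f_def)
  thus ?thesis
    by (intro step_certificateI[OF ext_val_infinity_left ext_val_const_left _ _
          admissible_pair_zero[of mu1 mu1] admissible_sigma3p[OF mu(2) l2(2)]])
      (use sum l2 in \<open>simp_all add: sigmap_f_def\<close>)
qed

lemma step_certificate_D3_infinity_right:
  assumes mu: "- mu2 < mu1" "mu2 < 0" and l: "mu1 < l1"
  shows "step_certificate 3 (ereal l1) \<infinity> mu1 mu2"
proof -
  define S where "S = 1/mu1 + 1/mu2"
  have mu1: "0 < mu1" and l1: "0 < l1" and S: "S < 0"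
    using mu l reciprocal_sum_neg[OF mu] by (simp_all add: S_def)
  have "1 - mu1 * S = - mu1 / mu2" using mu by (simp add: S_def field_simps)
  hence sum: "mu1 / (1 - mu1 * S) + mu2 = 0" using mu by simp
  have "0 < 1/l1" using l1 by simp
  hence "isCont (\<lambda>u. ((1/l1) * (S + u)) / ((S + u) - 1/l1)) 0"
    using S by (intro continuous_intros) auto
  from isCont_tendsto_compose[OF this, of "\<lambda>t. 1/t" at_top]
  have lim1: "((\<lambda>t. sigma_f 3 mu1 mu2 l1 t) \<longlongrightarrow> ((1/l1) * S) / (S - 1/l1)) at_top"
    by (simp add: sigma_f_def S1f_def S_def tendsto_divide_0[OF tendsto_const]
        filterlim_at_top_imp_at_infinity[OF filterlim_ident])
  have lim2: "((\<lambda>t. sigmap_f 3 mu1 mu2 l1 t) \<longlongrightarrow> 0) at_top"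
    by (simp add: sigmap_f_def) real_asymp
  show ?thesis
    by (rule step_certificateI[OF ext_val_infinity_right[where e = "sigma_f 3 mu1 mu2", OF lim1]
          ext_val_infinity_right[where e = "sigmap_f 3 mu1 mu2", OF lim2]
          admissible_sigma3(1)[OF mu1 l less_imp_le[OF S]] _
          admissible_sigma3(2)[OF mu1 l less_imp_le[OF S]] admissible_pair_zero[of mu2 mu2]])
      (use sum in simp_all)
qed

lemma step_certificate_D3:
  assumes L1: "0 < L1" "ereal mu1 < L1" and L2: "0 < L2" and notboth: "\<not> (L1 = \<infinity> \<and> L2 = \<infinity>)"
    and D: "inDom 3 L1 L2 mu1 mu2"
  shows "step_certificate 3 L1 L2 mu1 mu2"
proof -
  have mu: "- mu2 < mu1" "mu2 < 0" and L: "ereal mu1 < L2"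
    and S: "ext_val (S1f mu1 mu2) L1 L2 \<le> 0"
    using D by (auto simp: inDom_def Let_def)
  show ?thesis
    using L1 L2 notboth L S step_certificate_D3_finite[OF mu] step_certificate_D3_infinity_left[OF mu]
      step_certificate_D3_infinity_right[OF mu]
    by (cases L1; cases L2) (auto simp: ext_val_S1f_ereal_right)
qed

lemma step_certificate_D5:
  assumes L2: "0 < L2" and notboth: "\<not> (L1 = \<infinity> \<and> L2 = \<infinity>)" and D: "inDom 5 L1 L2 mu1 mu2"
  shows "step_certificate 5 L1 L2 mu1 mu2"
proof -
  have mu: "- mu2 < mu1" "mu2 < 0" and L1: "ereal mu2 < L1" and S: "0 < ext_val (S1f mu1 mu2) L1 L2"
    using D by (auto simp: inDom_def Let_def)
  have "1/mu1 + 1/mu2 < 0" by (rule reciprocal_sum_neg[OF mu])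
  moreover have "ext_val (S1f mu1 mu2) (ereal l1) \<infinity> = ereal (1/mu1 + 1/mu2)" for l1
    by (rule ext_val_infinity_right) (simp add: S1f_def, real_asymp)
  ultimately obtain l2 where l2: "L2 = ereal l2" "0 < l2"
    using L1 L2 notboth S by (cases L2; cases L1) auto
  have "0 < 1/mu1 + 1/mu2 + 1/l2" using S by (simp add: l2(1) ext_val_S1f_ereal_right)
  thus ?thesis unfolding l2(1)
    by (intro step_certificateI[OF _ _ _ _ admissible_pair_zero[of mu1 mu1] admissible_sigma5p]
        ext_val_const_left) (use mu l2 in \<open>auto simp: sigma_f_def sigmap_f_def\<close>)
qed

lemma step_certificate_D7:
  assumes mu2: "ereal mu2 < L2" and D: "inDom 7 L1 L2 mu1 mu2"
  shows "step_certificate 7 L1 L2 mu1 mu2"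
proof -
  have L: "L2 < ereal mu1" "0 < L2"
    and cnd: "mu2 \<ge> 0 \<or> (mu2 < 0 \<and> ext_val (S1f mu1 mu2) L1 L2 \<le> 0)"
    using D by (auto simp: inDom_def Let_def)
  obtain l2 where l2: "L2 = ereal l2" "0 < l2" "l2 < mu1" "mu2 < l2"
    using L mu2 by (cases L2) auto
  have "mu2 \<ge> 0 \<or> (0 < mu1 \<and> 1/mu1 + 1/mu2 + 1/l2 \<le> 0)"
    using cnd l2 by (auto simp: ext_val_S1f_ereal_right)
  thus ?thesis unfolding l2(1)
    by (intro step_certificateI[OF _ _ _ _ admissible_pair_zero[of mu1 mu1] admissible_sigma7p]
        ext_val_const_left) (use l2 in \<open>auto simp: sigma_f_def sigmap_f_def\<close>)
qed

text \<open>D_(2j) and its constants arise from D_(2j-1) by exchanging (L1, mu1) with (L2, mu2).\<close>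
definition mirror_dom :: "nat \<Rightarrow> nat" where
  "mirror_dom i = (if odd i then i + 1 else i - 1)"

lemma dom_cases:
  fixes i :: nat
  assumes "i \<in> {1..8}"
  obtains "i = 1" | "i = 2" | "i = 3" | "i = 4" | "i = 5" | "i = 6" | "i = 7" | "i = 8"
  using assms by fastforce

lemma sigma_f_mirror:
  assumes "i \<in> {1..8}"
  shows "(\<lambda>a b. sigma_f (mirror_dom i) mu2 mu1 b a) = sigmap_f i mu1 mu2"
    and "(\<lambda>a b. sigmap_f (mirror_dom i) mu2 mu1 b a) = sigma_f i mu1 mu2"
  using assms by (cases rule: dom_cases;
      simp add: fun_eq_iff mirror_dom_def sigma_f_def sigmap_f_def S1f_def S2f_def add_ac)+

lemma step_certificate_mirror:
  assumes "i \<in> {1..8}" and "step_certificate i L1 L2 mu1 mu2"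
  shows "step_certificate (mirror_dom i) L2 L1 mu2 mu1"
  using assms(2)
  unfolding step_certificate_def ext_val_swap[of "sigma_f _ mu2 mu1" L2]
    ext_val_swap[of "sigmap_f _ mu2 mu1" L2] sigma_f_mirror[OF assms(1)]
  by (metis add.commute)

lemma inDom_mirror:
  assumes "i \<in> {1..8}"
  shows "inDom (mirror_dom i) L2 L1 mu2 mu1 = inDom i L1 L2 mu1 mu2"
proof -
  have "(\<lambda>a b. S1f mu2 mu1 b a) = S2f mu1 mu2" "(\<lambda>a b. S2f mu2 mu1 b a) = S1f mu1 mu2"
    "(\<lambda>a b. T1f mu2 mu1 b a) = T2f mu1 mu2" "(\<lambda>a b. T2f mu2 mu1 b a) = T1f mu1 mu2"
    by (simp_all add: fun_eq_iff S1f_def S2f_def T1f_def T2f_def add_ac)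
  hence "ext_val (S1f mu2 mu1) L2 L1 = ext_val (S2f mu1 mu2) L1 L2"
    "ext_val (S2f mu2 mu1) L2 L1 = ext_val (S1f mu1 mu2) L1 L2"
    "ext_val (T1f mu2 mu1) L2 L1 = ext_val (T2f mu1 mu2) L1 L2"
    "ext_val (T2f mu2 mu1) L2 L1 = ext_val (T1f mu1 mu2) L1 L2"
    by (simp_all add: ext_val_swap[of _ L2 L1])
  with assms show ?thesis
    by (cases rule: dom_cases) (auto simp: inDom_def Let_def mirror_dom_def)
qed

lemma step_certificate_exists:
  assumes L1: "0 < L1" "ereal mu1 < L1" and L2: "0 < L2" "ereal mu2 < L2"
    and notboth: "\<not> (L1 = \<infinity> \<and> L2 = \<infinity>)" and i: "i \<in> {1..8}" and D: "inDom i L1 L2 mu1 mu2"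
  shows "step_certificate i L1 L2 mu1 mu2"
proof -
  have odd_dom: "step_certificate j M1 M2 m1 m2"
    if "j \<in> {1, 3, 5, 7}" "0 < M1" "ereal m1 < M1" "0 < M2" "ereal m2 < M2"
      "\<not> (M1 = \<infinity> \<and> M2 = \<infinity>)" "inDom j M1 M2 m1 m2" for j M1 M2 m1 m2
    using that step_certificate_D1 step_certificate_D3 step_certificate_D5 step_certificate_D7
    by auto
  show ?thesis
  proof (cases "odd i")
    case True
    with i have "i \<in> {1, 3, 5, 7}" by (cases rule: dom_cases) auto
    thus ?thesis using odd_dom L1 L2 notboth D by blast
  next
    case False
    with i have "mirror_dom i \<in> {1, 3, 5, 7}" "mirror_dom i \<in> {1..8}" "mirror_dom (mirror_dom i) = i"
      by (cases rule: dom_cases; simp add: mirror_dom_def)+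
    moreover from this have "step_certificate (mirror_dom i) L2 L1 mu2 mu1"
      using odd_dom L1 L2 notboth D inDom_mirror[OF i] by blast
    ultimately show ?thesis using step_certificate_mirror by metis
  qed
qed

lemma dca_step_decrease:
  fixes f1 f2 :: "'a::euclidean_space \<Rightarrow> real"
  assumes f1: "FmuL mu1 L1 f1" "ereal mu1 < L1" and f2: "FmuL mu2 L2 f2" "ereal mu2 < L2"
    and adm: "admissible_pair mu1 L1 s1 e1" "admissible_pair mu2 L2 s2 e2" "0 \<le> e1 + e2"
    and sub: "strong_subgrad mu1 f1 u g1" "strong_subgrad mu1 f1 v g"
      "strong_subgrad mu2 f2 u g" "strong_subgrad mu2 f2 v g2"
  shows "s1 / 2 * (norm (g1 - g))\<^sup>2 + s2 / 2 * (norm (g2 - g))\<^sup>2 \<le> (f1 u - f2 u) - (f1 v - f2 v)"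
proof -
  have "f1 v + inner g (u - v) + s1 / 2 * (norm (g1 - g))\<^sup>2 + e1 / 2 * (norm (u - v))\<^sup>2 \<le> f1 u"
    by (rule admissible_pair_descent[OF f1 adm(1) sub(1,2)])
  moreover have "f2 u - inner g (u - v) + s2 / 2 * (norm (g2 - g))\<^sup>2 + e2 / 2 * (norm (u - v))\<^sup>2 \<le> f2 v"
    using admissible_pair_descent[OF f2 adm(2) sub(4,3)] by (simp add: inner_diff_right norm_minus_commute)
  moreover have "0 \<le> e1 / 2 * (norm (u - v))\<^sup>2 + e2 / 2 * (norm (u - v))\<^sup>2"
    using adm(3) by (simp add: add_divide_distrib[symmetric] distrib_right[symmetric])
  ultimately show ?thesis by linarith
qed

lemma telescoping_min_bound:
  fixes F G :: "nat \<Rightarrow> real"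
  assumes ab: "0 \<le> a" "0 \<le> b"
    and step: "\<And>k. k < N \<Longrightarrow> a / 2 * G k + b / 2 * G (Suc k) \<le> F k - F (Suc k)"
  shows "real N * ((a + b) / 2 * Min (G ` {..N})) \<le> F 0 - F N"
proof -
  let ?m = "Min (G ` {..N})"
  have "(a + b) / 2 * ?m \<le> F k - F (Suc k)" if k: "k < N" for k
  proof -
    have "a / 2 * ?m \<le> a / 2 * G k" "b / 2 * ?m \<le> b / 2 * G (Suc k)"
      using k ab by (simp_all add: mult_left_mono)
    thus ?thesis using step[OF k] by (simp add: add_divide_distrib distrib_right)
  qed
  hence "(\<Sum>k<N. (a + b) / 2 * ?m) \<le> (\<Sum>k<N. F k - F (Suc k))"
    by (intro sum_mono) simp
  thus ?thesis by (simp add: sum_lessThan_telescope')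
qed

lemma dca_descent_sum:
  fixes f1 f2 :: "'a::euclidean_space \<Rightarrow> real" and x g1 g2 :: "nat \<Rightarrow> 'a"
  assumes f1: "FmuL mu1 L1 f1" "ereal mu1 < L1" and f2: "FmuL mu2 L2 f2" "ereal mu2 < L2"
    and s: "0 \<le> s1" "0 \<le> s2"
    and adm: "admissible_pair mu1 L1 s1 e1" "admissible_pair mu2 L2 s2 e2" "0 \<le> e1 + e2"
    and sub1: "\<And>k. k \<le> N \<Longrightarrow> strong_subgrad mu1 f1 (x k) (g1 k)"
    and sub2: "\<And>k. k \<le> N \<Longrightarrow> strong_subgrad mu2 f2 (x k) (g2 k)"
    and link: "\<And>k. k < N \<Longrightarrow> g1 (Suc k) = g2 k"
  shows "real N * ((s1 + s2) / 2 * Min {(norm (g1 k - g2 k))\<^sup>2 | k. k \<le> N})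
    \<le> (f1 (x 0) - f2 (x 0)) - (f1 (x N) - f2 (x N))"
proof -
  define G where "G k = (norm (g1 k - g2 k))\<^sup>2" for k
  have "{(norm (g1 k - g2 k))\<^sup>2 | k. k \<le> N} = G ` {..N}" by (auto simp: G_def)
  moreover have "real N * ((s1 + s2) / 2 * Min (G ` {..N}))
      \<le> (\<lambda>k. f1 (x k) - f2 (x k)) 0 - (\<lambda>k. f1 (x k) - f2 (x k)) N"
  proof (rule telescoping_min_bound[OF s])
    fix k assume k: "k < N"
    have "(norm (g2 (Suc k) - g2 k))\<^sup>2 = G (Suc k)"
      using link[OF k] by (simp add: G_def norm_minus_commute)
    thus "s1 / 2 * G k + s2 / 2 * G (Suc k) \<le> f1 (x k) - f2 (x k) - (f1 (x (Suc k)) - f2 (x (Suc k)))"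
      using dca_step_decrease[OF f1 f2 adm sub1[OF less_imp_le[OF k]]
          sub1[OF Suc_leI[OF k], unfolded link[OF k]] sub2[OF less_imp_le[OF k]]
          sub2[OF Suc_leI[OF k]]] link[OF k]
      by (simp add: G_def)
  qed
  ultimately show ?thesis by simp
qed

lemma gap_to_infimum_finite:
  fixes f1 f2 :: "'a::euclidean_space \<Rightarrow> real"
  assumes f1: "FmuL mu1 (ereal L) f1" and L: "mu2 < L"
    and g1: "\<And>w. f1 z + inner g1 (w - z) \<le> f1 w" and g2: "strong_subgrad mu2 f2 z g2"
    and bdd: "bdd_below (range (\<lambda>y. f1 y - f2 y))"
  shows "1 / (2 * (L - mu2)) * (norm (g1 - g2))\<^sup>2 \<le> (f1 z - f2 z) - (INF y. f1 y - f2 y)"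
proof -
  define c where "c = 1 / (L - mu2)"
  define d where "d = g1 - g2"
  define w where "w = z - c *\<^sub>R d"
  have wz: "w - z = (- c) *\<^sub>R d" by (simp add: w_def)
  have "f1 w \<le> f1 z + inner g1 (w - z) + L / 2 * (norm (w - z))\<^sup>2"
    by (rule quadratic_upper_bound[OF _ g1]) (use f1 in \<open>simp add: FmuL_def\<close>)
  moreover have "f2 z + inner g2 (w - z) + mu2 / 2 * (norm (w - z))\<^sup>2 \<le> f2 w"
    using g2 by (simp add: strong_subgrad_def)
  moreover have "inner g1 (w - z) - inner g2 (w - z) = - c * (norm d)\<^sup>2"
    by (simp add: wz d_def inner_diff_left power2_norm_eq_inner algebra_simps)
  moreover have "L / 2 * (norm (w - z))\<^sup>2 - mu2 / 2 * (norm (w - z))\<^sup>2 = c / 2 * (norm d)\<^sup>2"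
  proof -
    have "L / 2 * (norm (w - z))\<^sup>2 - mu2 / 2 * (norm (w - z))\<^sup>2
        = ((L - mu2) * c) * (c / 2 * (norm d)\<^sup>2)"
      by (simp add: wz power_mult_distrib power2_abs) (simp add: algebra_simps power2_eq_square)
    also have "(L - mu2) * c = 1" using L by (simp add: c_def)
    finally show ?thesis by simp
  qed
  moreover have "(INF y. f1 y - f2 y) \<le> f1 w - f2 w" by (rule cINF_lower[OF bdd]) simp
  moreover have "1 / (2 * (L - mu2)) * (norm d)\<^sup>2 = c / 2 * (norm d)\<^sup>2" by (simp add: c_def)
  ultimately show ?thesis unfolding d_def by linarith
qed

lemma gap_to_infimum:
  fixes f1 f2 :: "'a::euclidean_space \<Rightarrow> real"
  assumes f1: "FmuL mu1 L f1" and L: "ereal mu2 < L"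
    and g1: "\<And>w. f1 z + inner g1 (w - z) \<le> f1 w" and g2: "strong_subgrad mu2 f2 z g2"
    and bdd: "bdd_below (range (\<lambda>y. f1 y - f2 y))"
  shows "(if L = \<infinity> then 0 else 1 / (real_of_ereal L - mu2)) / 2 * (norm (g1 - g2))\<^sup>2
    \<le> (f1 z - f2 z) - (INF y. f1 y - f2 y)"
proof (cases L)
  case (real l)
  have "1 / (2 * (l - mu2)) * (norm (g1 - g2))\<^sup>2 \<le> (f1 z - f2 z) - (INF y. f1 y - f2 y)"
    using L real by (intro gap_to_infimum_finite[OF f1[unfolded real] _ g1 g2 bdd]) simp
  moreover have "(if L = \<infinity> then 0 else 1 / (real_of_ereal L - mu2)) / 2 * (norm (g1 - g2))\<^sup>2
      = 1 / (2 * (l - mu2)) * (norm (g1 - g2))\<^sup>2"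
    using real by simp
  ultimately show ?thesis by linarith
qed (use L cINF_lower[OF bdd, of z] in auto)

lemma dca_subgradients:
  fixes f1 f2 :: "'a::euclidean_space \<Rightarrow> real" and x g1 g2 :: "nat \<Rightarrow> 'a"
  assumes f1: "FmuL mu1 L1 f1" and f2: "FmuL mu2 L2 f2"
    and g2sub: "\<And>k. k \<le> N \<Longrightarrow> g2 k \<in> subdiff mu2 f2 (x k)"
    and dca_step: "\<And>k w. k < N \<Longrightarrow>
        f1 (x (Suc k)) - inner (g2 k) (x (Suc k)) \<le> f1 w - inner (g2 k) w"
    and g1_def: "\<And>k. 1 \<le> k \<Longrightarrow> k \<le> N \<Longrightarrow> g1 k = g2 (k - 1)"
    and g10: "g1 0 \<in> subdiff mu1 f1 (x 0)"
  shows "k < N \<Longrightarrow> g1 (Suc k) = g2 k"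
    and "0 < N \<Longrightarrow> f1 (x N) + inner (g1 N) (w - x N) \<le> f1 w"
    and "k \<le> N \<Longrightarrow> strong_subgrad mu1 f1 (x k) (g1 k)"
    and "k \<le> N \<Longrightarrow> strong_subgrad mu2 f2 (x k) (g2 k)"
proof -
  have subgrad: "f1 (x (Suc k)) + inner (g1 (Suc k)) (w - x (Suc k)) \<le> f1 w" if "k < N" for k w
    using dca_step[OF that, of w] g1_def[of "Suc k"] that by (simp add: inner_diff_right)
  show "k < N \<Longrightarrow> g1 (Suc k) = g2 k" using g1_def[of "Suc k"] by simp
  show "0 < N \<Longrightarrow> f1 (x N) + inner (g1 N) (w - x N) \<le> f1 w"
    using subgrad[of "N - 1"] by simp
  show "k \<le> N \<Longrightarrow> strong_subgrad mu1 f1 (x k) (g1 k)"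
    using strong_subgrad_of_subdiff[OF f1 g10] strong_subgrad_of_subgrad[OF f1 subgrad]
    by (cases k) auto
  show "k \<le> N \<Longrightarrow> strong_subgrad mu2 f2 (x k) (g2 k)"
    by (rule strong_subgrad_of_subdiff[OF f2 g2sub])
qed

theorem mainTheorem4:
  fixes f1 f2 :: "'a::euclidean_space \<Rightarrow> real"
    and L1 L2 :: ereal and mu1 mu2 :: real
    and N :: nat and x g1 g2 :: "nat \<Rightarrow> 'a" and i :: nat
  assumes L1pos: "L1 > 0" and L2pos: "L2 > 0"
    and notboth: "\<not> (L1 = \<infinity> \<and> L2 = \<infinity>)"
    and mu1L1: "ereal mu1 < L1" and mu2L2: "ereal mu2 < L2"
    and musum: "mu1 + mu2 > 0 \<or> (mu1 = 0 \<and> mu2 = 0)"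
    and f1cls: "FmuL mu1 L1 f1" and f2cls: "FmuL mu2 L2 f2"
    and Fbdd: "bdd_below (range (\<lambda>y. f1 y - f2 y))"
    and N1: "N \<ge> 1"
    and g2sub: "\<And>k. k \<le> N \<Longrightarrow> g2 k \<in> subdiff mu2 f2 (x k)"
    and dca_step: "\<And>k w. k < N \<Longrightarrow>
        f1 (x (Suc k)) - inner (g2 k) (x (Suc k)) \<le> f1 w - inner (g2 k) w"
    and g1_def: "\<And>k. 1 \<le> k \<Longrightarrow> k \<le> N \<Longrightarrow> g1 k = g2 (k - 1)"
    and g10: "g1 0 \<in> subdiff mu1 f1 (x 0)"
    and dom: "i \<in> {1..8}" "inDom i L1 L2 mu1 mu2"
    and ppos: "p_const i L1 L2 mu1 mu2 > 0"
  shows "(1/2 * Min {(norm (g1 k - g2 k))\<^sup>2 | k. k \<le> N}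
           \<le> ((f1 (x 0) - f2 (x 0)) - (f1 (x N) - f2 (x N)))
               / (real_of_ereal (p_const i L1 L2 mu1 mu2) * real N))
     \<and> (L1 > ereal mu2 \<longrightarrow>
         1/2 * Min {(norm (g1 k - g2 k))\<^sup>2 | k. k \<le> N}
           \<le> ((f1 (x 0) - f2 (x 0)) - (INF y. f1 y - f2 y))
               / (real_of_ereal (p_const i L1 L2 mu1 mu2) * real N
                  + (if L1 = \<infinity> then 0 else 1 / (real_of_ereal L1 - mu2))))"
proof -
  obtain s1 s2 e1 e2 where p: "p_const i L1 L2 mu1 mu2 = ereal (s1 + s2)"
    and s: "0 \<le> s1" "0 \<le> s2"
    and adm: "admissible_pair mu1 L1 s1 e1" "admissible_pair mu2 L2 s2 e2" "0 \<le> e1 + e2"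
    using step_certificate_exists[OF L1pos mu1L1 L2pos mu2L2 notboth dom]
    unfolding step_certificate_def p_const_def by auto
  have dca: "\<And>k. k < N \<Longrightarrow> g1 (Suc k) = g2 k"
    "\<And>w. f1 (x N) + inner (g1 N) (w - x N) \<le> f1 w"
    "\<And>k. k \<le> N \<Longrightarrow> strong_subgrad mu1 f1 (x k) (g1 k)"
    "\<And>k. k \<le> N \<Longrightarrow> strong_subgrad mu2 f2 (x k) (g2 k)"
    using dca_subgradients[OF f1cls f2cls g2sub dca_step g1_def g10] N1 by auto
  define m where "m = Min {(norm (g1 k - g2 k))\<^sup>2 | k. k \<le> N}"
  have descent: "real N * ((s1 + s2) / 2 * m) \<le> (f1 (x 0) - f2 (x 0)) - (f1 (x N) - f2 (x N))"
    unfolding m_def by (rule dca_descent_sum[OF f1cls mu1L1 f2cls mu2L2 s adm]) (simp_all add: dca)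
  have P: "0 < (s1 + s2) * real N" using ppos N1 by (simp add: p)
  show ?thesis unfolding m_def[symmetric] p real_of_ereal.simps
  proof (intro conjI impI)
    have "1/2 * m * ((s1 + s2) * real N) = real N * ((s1 + s2) / 2 * m)" by simp
    thus "1/2 * m \<le> ((f1 (x 0) - f2 (x 0)) - (f1 (x N) - f2 (x N))) / ((s1 + s2) * real N)"
      using descent by (subst pos_le_divide_eq[OF P]) linarith
  next
    assume L1: "L1 > ereal mu2"
    define c where "c = (if L1 = \<infinity> then 0 else 1 / (real_of_ereal L1 - mu2))"
    have c: "0 \<le> c" using L1 by (cases L1) (auto simp: c_def)
    have "c / 2 * m \<le> c / 2 * (norm (g1 N - g2 N))\<^sup>2"
      using c unfolding m_def by (intro mult_left_mono Min_le) auto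
    also have "\<dots> \<le> (f1 (x N) - f2 (x N)) - (INF y. f1 y - f2 y)"
      unfolding c_def by (intro gap_to_infimum[OF f1cls L1 dca(2) dca(4)[OF order_refl] Fbdd])
    moreover have "1/2 * m * ((s1 + s2) * real N + c) = real N * ((s1 + s2) / 2 * m) + c / 2 * m"
      by (simp add: algebra_simps)
    moreover have "0 < (s1 + s2) * real N + c" using P c by simp
    ultimately show
      "1/2 * m \<le> ((f1 (x 0) - f2 (x 0)) - (INF y. f1 y - f2 y)) / ((s1 + s2) * real N + c)"
      using descent by (subst pos_le_divide_eq) linarith+
  qed
qed

end
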